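(* Let $c,o\in\{1,\dots,N\}$ and define the polynomial $$h(s)=e_o^{T}\,\operatorname{adj}(sI+L)\,e_c=\sum_{i=0}^{N-1}h_i s^i,$$ that is, the $(o,c)$ entry of the adjugate of $sI+L$. Then for every $i=0,\dots,N-1$, $$h_i=\vartheta\big(\mathcal F_{N-i-1}^{c\to o}\big).$$
   Context: Let $\mathcal G$ be a weighted directed graph on the vertex set $\{1,\dots,N\}$ with adjacency matrix $A=[a_{ij}]$, where $a_{ij}>0$ if there is an arc from $j$ to $i$ and $a_{ij}=0$ otherwise (no self-loops). The weight of that arc is $a_{ij}$. The Laplacian is $L=D-A$ with $D=\mathrm{diag}(\sum_j a_{ij})$. The vector $e_i$ is the $i$-th canonical basis vector, and $I$ is the identity matrix. A diverging (out-)tree is a set of arcs on a vertex subset that has a root vertex of in-degree $0$, has every other vertex of in-degree exactly $1$, and has a directed path from the root to every vertex of the subset. A spanning diverging forest is a set of arcs whose diverging trees partition all $N$ vertices; isolated vertices are trivial trees. The weight of a forest is the product of its arc weights. $\mathcal F_k^{u\to w}$ is the set of all spanning diverging forests with exactly $k$ arcs in which $u$ is the root of a tree containing $w$. The quantity $\vartheta(\mathcal F_k^{u\to w})$ is the sum of the weights of its members; it is $0$ if the set is empty. *)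

theory Defs
  imports "Jordan_Normal_Form.Determinant" "HOL-Library.Disjoint_Sets"
          "HOL-Computational_Algebra.Polynomial"
begin

text \<open>Vertices are 0,...,N-1 (the paper's 1,...,N shifted by one).
  A is the weighted adjacency matrix: A(i,j) > 0 iff there is an arc from j to i.
  An arc from j to i is represented as the pair (j,i) (tail, head).\<close>

definition arcs :: "real mat \<Rightarrow> (nat \<times> nat) set" where
  "arcs A = {(j,i). i < dim_row A \<and> j < dim_col A \<and> A $$ (i,j) > 0}"

definition degree_mat :: "real mat \<Rightarrow> real mat" where
  "degree_mat A = mat (dim_row A) (dim_row A)
     (\<lambda>(i,j). if i = j then (\<Sum>k<dim_col A. A $$ (i,k)) else 0)"

definition laplacian :: "real mat \<Rightarrow> real mat" where
  "laplacian A = degree_mat A - A"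

definition sI_plus :: "real mat \<Rightarrow> real poly mat" where
  "sI_plus L = [:0, 1:] \<cdot>\<^sub>m 1\<^sub>m (dim_row L) + map_mat (\<lambda>x. [:x:]) L"

definition diverging_tree :: "(nat \<times> nat) set \<Rightarrow> nat set \<Rightarrow> nat \<Rightarrow> bool" where
  "diverging_tree T S r \<longleftrightarrow>
     r \<in> S \<and> T \<subseteq> S \<times> S \<and>
     (\<forall>v\<in>S. card {u. (u,v) \<in> T} = (if v = r then 0 else 1)) \<and>
     (\<forall>v\<in>S. (r,v) \<in> T\<^sup>*)"

definition forest_with_parts :: "real mat \<Rightarrow> (nat \<times> nat) set \<Rightarrow> nat set set \<Rightarrow> bool" where
  "forest_with_parts A F P \<longleftrightarrow>
     F \<subseteq> arcs A \<and> partition_on {0..<dim_row A} P \<and>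
     F \<subseteq> (\<Union>S\<in>P. S \<times> S) \<and>
     (\<forall>S\<in>P. \<exists>r. diverging_tree (F \<inter> (S \<times> S)) S r)"

definition spanning_diverging_forest :: "real mat \<Rightarrow> (nat \<times> nat) set \<Rightarrow> bool" where
  "spanning_diverging_forest A F \<longleftrightarrow> (\<exists>P. forest_with_parts A F P)"

definition forests_root :: "real mat \<Rightarrow> nat \<Rightarrow> nat \<Rightarrow> nat \<Rightarrow> (nat \<times> nat) set set" where
  "forests_root A k u w = {F. card F = k \<and>
     (\<exists>P. forest_with_parts A F P \<and>
        (\<exists>S\<in>P. u \<in> S \<and> w \<in> S \<and> diverging_tree (F \<inter> (S \<times> S)) S u))}"

definition forest_weight :: "real mat \<Rightarrow> (nat \<times> nat) set \<Rightarrow> real" where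
  "forest_weight A F = (\<Prod>(j,i)\<in>F. A $$ (i,j))"

definition theta :: "real mat \<Rightarrow> (nat \<times> nat) set set \<Rightarrow> real" where
  "theta A \<F> = (\<Sum>F\<in>\<F>. forest_weight A F)"

end

theory Submission
  imports Defs
begin

text \<open>
  The entry is the cofactor of sI + L at (c, o): the determinant of sI + L with row c replaced
  by the unit row e_o. Every other row i equals s e_i + sum_(j ~= i) a_ij (e_i - e_j), so by
  multilinearity the determinant expands over the ways of choosing, for each i ~= c, either the
  term s e_i or a parent j of i. The determinant of the chosen rows is 1 if the parent arcs are
  acyclic and lead from c to o, and 0 otherwise: the rows of the vertices on a cycle add up to
  zero, and adding the rows along the path back from o turns e_o into the row of its root.
  Acyclic parent relations are exactly the spanning diverging forests (the trees are the classes
  of vertices with a common root), and a forest with k arcs picks s at its N - 1 - k roots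
  other than c.
\<close>

section \<open>Multilinearity of the determinant\<close>

lemma det_add_row:
  fixes A B C :: "'a::comm_ring_1 mat"
  assumes A: "A \<in> carrier_mat n n" and B: "B \<in> carrier_mat n n" and C: "C \<in> carrier_mat n n"
    and k: "k < n"
    and rows: "\<And>i j. i < n \<Longrightarrow> j < n \<Longrightarrow> i \<noteq> k \<Longrightarrow> B $$ (i,j) = A $$ (i,j) \<and> C $$ (i,j) = A $$ (i,j)"
    and row_k: "\<And>j. j < n \<Longrightarrow> A $$ (k,j) = B $$ (k,j) + C $$ (k,j)"
  shows "det A = det B + det C"
proof -
  have "A = mat\<^sub>r n n (\<lambda>i. if i = k then row B i + row C i else row A i)"
    "B = mat\<^sub>r n n (\<lambda>i. if i = k then row B i else row A i)"
    "C = mat\<^sub>r n n (\<lambda>i. if i = k then row C i else row A i)"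
    using A B C by (auto intro!: eq_matI simp: rows row_k)
  then show ?thesis
    using det_row_add[of "\<lambda>i. row B i" k n "\<lambda>i. row C i" "\<lambda>i. row A i"] A B C k by auto
qed

lemma det_expand_rows:
  fixes M :: "'a::comm_ring_1 mat"
  assumes M: "M \<in> carrier_mat n n" and fin: "\<And>i. i < n \<Longrightarrow> finite (X i)"
    and entry: "\<And>i k. i < n \<Longrightarrow> k < n \<Longrightarrow> M $$ (i,k) = (\<Sum>x\<in>X i. w i x * V i x k)"
  shows "det M = (\<Sum>f\<in>PiE {0..<n} X. (\<Prod>i=0..<n. w i (f i)) * det (mat n n (\<lambda>(i,k). V i (f i) k)))"
proof -
  let ?P = "{p. p permutes {0..<n}}"
  have perm_lt: "p i < n" if "p \<in> ?P" "i \<in> {0..<n}" for p i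
    using that by (simp add: permutes_in_image)
  have det_V: "det (mat n n (\<lambda>(i,k). V i (f i) k)) = (\<Sum>p\<in>?P. signof p * (\<Prod>i=0..<n. V i (f i) (p i)))"
    for f unfolding det_def'[OF mat_carrier]
    by (intro sum.cong refl arg_cong2[where f="(*)"] prod.cong) (auto simp: perm_lt)
  have "det M = (\<Sum>p\<in>?P. signof p * (\<Prod>i=0..<n. \<Sum>x\<in>X i. w i x * V i x (p i)))"
    unfolding det_def'[OF M]
    by (intro sum.cong refl arg_cong2[where f="(*)"] prod.cong) (auto simp: entry perm_lt)
  also have "\<dots> = (\<Sum>p\<in>?P. \<Sum>f\<in>PiE {0..<n} X.
      (\<Prod>i=0..<n. w i (f i)) * (signof p * (\<Prod>i=0..<n. V i (f i) (p i))))"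
    by (subst prod_sum_PiE) (auto simp: fin sum_distrib_left prod.distrib algebra_simps)
  also have "\<dots> = (\<Sum>f\<in>PiE {0..<n} X. (\<Prod>i=0..<n. w i (f i)) * det (mat n n (\<lambda>(i,k). V i (f i) k)))"
    by (subst sum.swap) (simp add: det_V sum_distrib_left)
  finally show ?thesis .
qed

lemma cofactor_eq_det_replace_row:
  fixes M :: "'a::comm_ring_1 mat"
  assumes M: "M \<in> carrier_mat n n" and i: "i < n" and j: "j < n"
  shows "cofactor M i j = det (mat n n (\<lambda>(r,k). if r = i then (if k = j then 1 else 0) else M $$ (r,k)))"
    (is "_ = det ?M'")
proof -
  have M': "?M' \<in> carrier_mat n n" by simp
  have "det ?M' = (\<Sum>k<n. ?M' $$ (i,k) * cofactor ?M' i k)"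
    by (rule laplace_expansion_row[OF M' i])
  also have "\<dots> = (\<Sum>k<n. if k = j then cofactor ?M' i k else 0)"
    by (rule sum.cong) (auto simp: i)
  also have "\<dots> = cofactor ?M' i j"
    using j by simp
  also have "mat_delete ?M' i j = mat_delete M i j"
    using M by (intro eq_matI) (auto simp: mat_delete_def)
  then have "cofactor ?M' i j = cofactor M i j"
    by (simp add: cofactor_def)
  finally show ?thesis by simp
qed

section \<open>Roots in relations with unique parents\<close>

definition root_of :: "('a \<times> 'a) set \<Rightarrow> 'a \<Rightarrow> 'a" where
  "root_of F x = (THE r. (r, x) \<in> F\<^sup>* \<and> r \<notin> Range F)"

lemma parentless_ancestor_unique:
  assumes sv: "single_valued (F\<inverse>)" and r1: "(r1, v) \<in> F\<^sup>*" "r1 \<notin> Range F"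
  shows "(r2, v) \<in> F\<^sup>* \<Longrightarrow> r2 \<notin> Range F \<Longrightarrow> r1 = r2"
  using r1(1)
proof (induction arbitrary: r2 rule: rtrancl_induct)
  case base
  then show ?case using r1(2) by (auto elim: rtranclE)
next
  case (step y z)
  from step.prems(1) show ?case
  proof (cases rule: rtranclE)
    case base
    then show ?thesis using step.hyps(2) step.prems(2) by auto
  next
    case (step y')
    then have "y' = y" using sv \<open>(y, z) \<in> F\<close> by (auto dest: single_valuedD)
    then show ?thesis using step step.IH step.prems(2) by auto
  qed
qed

lemma acyclic_exists_parentless_ancestor:
  assumes "finite F" "acyclic F"
  shows "\<exists>r. (r, x) \<in> F\<^sup>* \<and> r \<notin> Range F"
proof (induction x rule: wf_induct[OF finite_acyclic_wf[OF assms]])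
  case (1 x)
  show ?case
  proof (cases "x \<in> Range F")
    case True
    then obtain u where u: "(u, x) \<in> F" by auto
    with 1 obtain r where "(r, u) \<in> F\<^sup>*" "r \<notin> Range F" by auto
    with u show ?thesis by (meson rtrancl.rtrancl_into_rtrancl)
  qed auto
qed

lemma root_of_eq:
  assumes "single_valued (F\<inverse>)" "(r, x) \<in> F\<^sup>*" "r \<notin> Range F"
  shows "root_of F x = r"
  unfolding root_of_def
proof (rule the_equality)
  show "(r, x) \<in> F\<^sup>* \<and> r \<notin> Range F" using assms(2,3) ..
  show "r' = r" if "(r', x) \<in> F\<^sup>* \<and> r' \<notin> Range F" for r'
    using parentless_ancestor_unique[OF assms, of r'] that by (simp add: eq_commute)
qed

lemma root_of:
  assumes "finite F" "acyclic F" "single_valued (F\<inverse>)"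
  shows "(root_of F x, x) \<in> F\<^sup>*" "root_of F x \<notin> Range F"
proof -
  obtain r where "(r, x) \<in> F\<^sup>*" "r \<notin> Range F"
    using acyclic_exists_parentless_ancestor[OF assms(1,2)] by blast
  with root_of_eq[OF assms(3) this] show "(root_of F x, x) \<in> F\<^sup>*" "root_of F x \<notin> Range F"
    by simp_all
qed

lemma root_of_rtrancl:
  assumes "finite F" "acyclic F" "single_valued (F\<inverse>)" "(a, b) \<in> F\<^sup>*"
  shows "root_of F a = root_of F b"
proof -
  have "(root_of F a, b) \<in> F\<^sup>*"
    using root_of(1)[OF assms(1-3)] assms(4) by (rule rtrancl_trans)
  from root_of_eq[OF assms(3) this root_of(2)[OF assms(1-3)]] show ?thesis ..
qed

lemma acyclic_if_parentless_ancestors: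
  assumes sv: "single_valued (F\<inverse>)" and anc: "\<And>x. \<exists>r. (r, x) \<in> F\<^sup>* \<and> r \<notin> Range F"
  shows "acyclic F"
proof -
  have "(u, u) \<notin> F\<^sup>+" if "(r, u) \<in> F\<^sup>*" "r \<notin> Range F" for r u
    using that(1)
  proof (induction rule: rtrancl_induct)
    case base
    show ?case using that(2) by (auto dest: tranclD2)
  next
    case (step y u)
    show ?case
    proof
      assume "(u, u) \<in> F\<^sup>+"
      then obtain z where z: "(u, z) \<in> F\<^sup>*" "(z, u) \<in> F" by (meson tranclD2)
      then have "z = y" using sv step.hyps(2) by (auto dest: single_valuedD)
      then have "(y, y) \<in> F\<^sup>+" using step.hyps(2) z(1) by (meson rtrancl_into_trancl2)
      then show False using step.IH by simp
    qed
  qed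
  then show ?thesis unfolding acyclic_def using anc by blast
qed

section \<open>Diverging forests\<close>

definition root_class :: "('a \<times> 'a) set \<Rightarrow> 'a set \<Rightarrow> 'a \<Rightarrow> 'a set" where
  "root_class F V y = {x \<in> V. root_of F x = root_of F y}"

lemma diverging_tree_root_class:
  assumes fin: "finite F" and ac: "acyclic F" and sv: "single_valued (F\<inverse>)"
    and FV: "F \<subseteq> V \<times> V" and y: "y \<in> V"
  defines "S \<equiv> root_class F V y"
  shows "diverging_tree (F \<inter> S \<times> S) S (root_of F y)"
proof -
  let ?r = "root_of F y"
  have arc_root: "root_of F a = root_of F b" if "(a, b) \<in> F" for a b
    using root_of_rtrancl[OF fin ac sv r_into_rtrancl[OF that]] .
  have arc_in_S: "a \<in> S" if "(a, b) \<in> F" "b \<in> S" for a b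
    using that FV arc_root[OF that(1)] by (auto simp: S_def root_class_def)
  have "?r \<in> V"
    using root_of(1)[OF fin ac sv, of y] y FV by (auto elim: converse_rtranclE)
  moreover have root_root: "root_of F ?r = ?r"
    using root_of_eq[OF sv rtrancl_refl root_of(2)[OF fin ac sv]] .
  ultimately have r_in_S: "?r \<in> S" by (simp add: S_def root_class_def)
  have path_in_S: "(a, b) \<in> (F \<inter> S \<times> S)\<^sup>*" if "(a, b) \<in> F\<^sup>*" "b \<in> S" for a b
    using that
  proof (induction rule: rtrancl_induct)
    case (step u v)
    then have "u \<in> S" using arc_in_S by blast
    with step show ?case by (meson IntI SigmaI rtrancl.rtrancl_into_rtrancl)
  qed simp
  show ?thesis
    unfolding diverging_tree_def
  proof (intro conjI ballI)
    show "?r \<in> S" "F \<inter> S \<times> S \<subseteq> S \<times> S" using r_in_S by auto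
  next
    fix v assume v: "v \<in> S"
    then have root_v: "root_of F v = ?r" by (simp add: S_def root_class_def)
    show "(?r, v) \<in> (F \<inter> S \<times> S)\<^sup>*"
      using path_in_S[OF root_of(1)[OF fin ac sv] v] root_v by simp
    show "card {u. (u, v) \<in> F \<inter> S \<times> S} = (if v = ?r then 0 else 1)"
    proof (cases "v \<in> Range F")
      case True
      then obtain u where u: "(u, v) \<in> F" by blast
      have "{u. (u, v) \<in> F \<inter> S \<times> S} = {u}"
        using u v arc_in_S sv by (auto dest: single_valuedD)
      moreover have "v \<noteq> ?r" using True root_of(2)[OF fin ac sv, of y] by auto
      ultimately show ?thesis by simp
    next
      case False
      have "v = ?r" using root_of_eq[OF sv rtrancl_refl False] root_v by simp
      moreover have "{u. (u, v) \<in> F \<inter> S \<times> S} = {}" using False by auto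
      ultimately show ?thesis by (simp only: card.empty) simp
    qed
  qed
qed

lemma arcs_subset: "A \<in> carrier_mat N N \<Longrightarrow> arcs A \<subseteq> {0..<N} \<times> {0..<N}"
  by (auto simp: arcs_def)

lemma forest_with_parts_root_classes:
  assumes A: "A \<in> carrier_mat N N" and F: "F \<subseteq> arcs A" and ac: "acyclic F" and sv: "single_valued (F\<inverse>)"
  shows "forest_with_parts A F (root_class F {0..<N} ` {0..<N})"
proof -
  have FV: "F \<subseteq> {0..<N} \<times> {0..<N}" using F arcs_subset[OF A] by blast
  then have fin: "finite F" by (rule finite_subset) simp
  have arc_root: "root_of F a = root_of F b" if "(a, b) \<in> F" for a b
    using root_of_rtrancl[OF fin ac sv r_into_rtrancl[OF that]] .
  show ?thesis
    unfolding forest_with_parts_def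
  proof (intro conjI ballI)
    show "F \<subseteq> arcs A" by (rule F)
    show "partition_on {0..<dim_row A} (root_class F {0..<N} ` {0..<N})"
      using A by (auto simp: partition_on_def disjoint_def root_class_def)
    show "F \<subseteq> (\<Union>S\<in>root_class F {0..<N} ` {0..<N}. S \<times> S)"
      using FV arc_root by (fastforce simp: root_class_def)
  next
    fix S assume "S \<in> root_class F {0..<N} ` {0..<N}"
    then obtain y where "y < N" "S = root_class F {0..<N} y" by auto
    then show "\<exists>r. diverging_tree (F \<inter> S \<times> S) S r"
      using diverging_tree_root_class[OF fin ac sv FV] by auto
  qed
qed

lemma forest_with_parts_arc_in_part:
  assumes "forest_with_parts A F P" "S \<in> P" "v \<in> S" "(u, v) \<in> F"
  shows "u \<in> S"
proof -
  obtain S' where "S' \<in> P" "(u, v) \<in> S' \<times> S'"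
    using assms(1,4) by (auto simp: forest_with_parts_def)
  moreover have "disjoint P"
    using assms(1) by (auto simp: forest_with_parts_def partition_on_def)
  ultimately show ?thesis using assms(2,3) by (auto simp: disjoint_def)
qed

lemma forest_with_parts_part:
  assumes "forest_with_parts A F P" "v < dim_row A"
  obtains S r where "S \<in> P" "v \<in> S" "diverging_tree (F \<inter> S \<times> S) S r" "finite S"
proof -
  have part: "partition_on {0..<dim_row A} P" using assms(1) by (simp add: forest_with_parts_def)
  then have "v \<in> \<Union>P" using assms(2) by (simp add: partition_on_def)
  then obtain S where S: "S \<in> P" "v \<in> S" by blast
  moreover have "finite S" using part S(1) by (auto simp: partition_on_def intro: finite_subset)
  moreover obtain r where "diverging_tree (F \<inter> S \<times> S) S r"
    using assms(1) S(1) by (auto simp: forest_with_parts_def)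
  ultimately show thesis using that by blast
qed

lemma forest_with_parts_root_parentless:
  assumes fwp: "forest_with_parts A F P" and S: "S \<in> P" "finite S"
    and tree: "diverging_tree (F \<inter> S \<times> S) S r"
  shows "r \<notin> Range F"
proof
  assume "r \<in> Range F"
  then obtain u where u: "(u, r) \<in> F" by blast
  have r: "r \<in> S" using tree by (simp add: diverging_tree_def)
  have "u \<in> {u. (u, r) \<in> F \<inter> S \<times> S}"
    using u r forest_with_parts_arc_in_part[OF fwp S(1) r u] by simp
  moreover have "card {u. (u, r) \<in> F \<inter> S \<times> S} = 0"
    using tree r by (simp add: diverging_tree_def)
  moreover have "finite {u. (u, r) \<in> F \<inter> S \<times> S}"
    using S(2) by (rule finite_subset[rotated]) auto
  ultimately show False by (metis card_0_eq empty_iff)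
qed

lemma forest_with_parts_single_parent:
  assumes fwp: "forest_with_parts A F P"
  shows "single_valued (F\<inverse>)"
proof (rule single_valuedI)
  fix v u u' assume "(v, u) \<in> F\<inverse>" "(v, u') \<in> F\<inverse>"
  then have uv: "(u, v) \<in> F" "(u', v) \<in> F" by auto
  have "v < dim_row A" using uv(1) fwp by (auto simp: forest_with_parts_def arcs_def)
  then obtain S r where S: "S \<in> P" "v \<in> S" "diverging_tree (F \<inter> S \<times> S) S r" "finite S"
    by (rule forest_with_parts_part[OF fwp])
  have "card {u. (u, v) \<in> F \<inter> S \<times> S} \<le> 1"
    using S(2,3) by (simp add: diverging_tree_def)
  moreover have "finite {u. (u, v) \<in> F \<inter> S \<times> S}"
    using S(4) by (rule finite_subset[rotated]) auto
  moreover have "u \<in> {u. (u, v) \<in> F \<inter> S \<times> S}" "u' \<in> {u. (u, v) \<in> F \<inter> S \<times> S}"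
    using uv S(2) forest_with_parts_arc_in_part[OF fwp S(1,2)] by auto
  ultimately show "u = u'" by (auto simp: card_le_Suc0_iff_eq)
qed

lemma forest_with_parts_acyclic:
  assumes fwp: "forest_with_parts A F P"
  shows "acyclic F"
proof (rule acyclic_if_parentless_ancestors[OF forest_with_parts_single_parent[OF fwp]])
  fix x
  show "\<exists>r. (r, x) \<in> F\<^sup>* \<and> r \<notin> Range F"
  proof (cases "x < dim_row A")
    case True
    then obtain S r where S: "S \<in> P" "x \<in> S" "diverging_tree (F \<inter> S \<times> S) S r" "finite S"
      by (rule forest_with_parts_part[OF fwp])
    then have "(r, x) \<in> F\<^sup>*"
      using rtrancl_mono[of "F \<inter> S \<times> S" F] by (auto simp: diverging_tree_def)
    then show ?thesis using forest_with_parts_root_parentless[OF fwp S(1,4,3)] by blast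
  next
    case False
    then have "x \<notin> Range F" using fwp by (auto simp: forest_with_parts_def arcs_def)
    then show ?thesis by blast
  qed
qed

definition rooted_forests :: "real mat \<Rightarrow> nat \<Rightarrow> nat \<Rightarrow> (nat \<times> nat) set set" where
  "rooted_forests A c ob =
     {F. F \<subseteq> arcs A \<and> single_valued (F\<inverse>) \<and> acyclic F \<and> c \<notin> Range F \<and> (c, ob) \<in> F\<^sup>*}"

lemma forests_root_eq:
  assumes A: "A \<in> carrier_mat N N" and c: "c < N"
  shows "forests_root A k c ob = {F \<in> rooted_forests A c ob. card F = k}"
proof (rule equalityI; rule subsetI)
  fix F assume "F \<in> forests_root A k c ob"
  then obtain P S where card: "card F = k" and fwp: "forest_with_parts A F P"
    and S: "S \<in> P" "c \<in> S" "ob \<in> S" and tree: "diverging_tree (F \<inter> S \<times> S) S c"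
    unfolding forests_root_def by blast
  have "finite S" using fwp S(1) by (auto simp: forest_with_parts_def partition_on_def intro: finite_subset)
  moreover have "(c, ob) \<in> F\<^sup>*"
    using tree S(3) rtrancl_mono[of "F \<inter> S \<times> S" F] by (auto simp: diverging_tree_def)
  ultimately show "F \<in> {F \<in> rooted_forests A c ob. card F = k}"
    using card fwp forest_with_parts_single_parent forest_with_parts_acyclic
      forest_with_parts_root_parentless[OF fwp S(1) _ tree]
    by (auto simp: rooted_forests_def forest_with_parts_def)
next
  fix F assume "F \<in> {F \<in> rooted_forests A c ob. card F = k}"
  then have F: "F \<subseteq> arcs A" and sv: "single_valued (F\<inverse>)" and ac: "acyclic F"
    and c_root: "c \<notin> Range F" and c_ob: "(c, ob) \<in> F\<^sup>*" and card: "card F = k"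
    by (auto simp: rooted_forests_def)
  have FV: "F \<subseteq> {0..<N} \<times> {0..<N}" using F arcs_subset[OF A] by blast
  then have fin: "finite F" by (rule finite_subset) simp
  let ?S = "root_class F {0..<N} c"
  have root_c: "root_of F c = c" by (rule root_of_eq[OF sv rtrancl_refl c_root])
  have "ob < N" using c_ob by (rule rtranclE) (use c FV in auto)
  then have "c \<in> ?S" "ob \<in> ?S"
    using c root_c root_of_eq[OF sv c_ob c_root] by (auto simp: root_class_def)
  moreover have "diverging_tree (F \<inter> ?S \<times> ?S) ?S c"
    using diverging_tree_root_class[OF fin ac sv FV, of c] c root_c by simp
  moreover have "?S \<in> root_class F {0..<N} ` {0..<N}" using c by simp
  ultimately show "F \<in> forests_root A k c ob"
    unfolding forests_root_def using card forest_with_parts_root_classes[OF A F ac sv] by blast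
qed

section \<open>Parent functions\<close>

definition parent_arcs :: "nat \<Rightarrow> (nat \<Rightarrow> nat option) \<Rightarrow> (nat \<times> nat) set" where
  "parent_arcs n f = {(j, i). i < n \<and> f i = Some j}"

lemma parent_arcs_eq_image: "parent_arcs n f = (\<lambda>i. (the (f i), i)) ` {i \<in> {0..<n}. f i \<noteq> None}"
  by (auto simp: parent_arcs_def image_def)

lemma finite_parent_arcs: "finite (parent_arcs n f)"
  by (simp add: parent_arcs_eq_image)

lemma card_parent_arcs: "card (parent_arcs n f) = card {i \<in> {0..<n}. f i \<noteq> None}"
  unfolding parent_arcs_eq_image by (rule card_image) (auto intro: inj_onI)

lemma parent_arcs_last:
  assumes "(c, x) \<in> (parent_arcs n f)\<^sup>*" "x \<noteq> c"
  obtains y where "x < n" "f x = Some y" "(c, y) \<in> (parent_arcs n f)\<^sup>*"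
  using assms by (auto elim: rtranclE simp: parent_arcs_def)

definition incidence_entry :: "nat \<Rightarrow> nat \<Rightarrow> nat \<Rightarrow> nat option \<Rightarrow> nat \<Rightarrow> 'a::ring_1" where
  "incidence_entry c x i p k =
     (if i = c then (if k = x then 1 else 0) else (if k = i then 1 else 0) - (if p = Some k then 1 else 0))"

definition parent_incidence_mat :: "nat \<Rightarrow> nat \<Rightarrow> (nat \<Rightarrow> nat option) \<Rightarrow> nat \<Rightarrow> 'a::ring_1 mat" where
  "parent_incidence_mat n c f x = mat n n (\<lambda>(i, k). incidence_entry c x i (f i) k)"

lemma parent_incidence_mat_carrier [simp]: "parent_incidence_mat n c f x \<in> carrier_mat n n"
  by (simp add: parent_incidence_mat_def)

lemma parent_incidence_mat_dim [simp]:
  "dim_row (parent_incidence_mat n c f x) = n" "dim_col (parent_incidence_mat n c f x) = n"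
  by (simp_all add: parent_incidence_mat_def)

lemma det_parent_incidence_mat_parent:
  assumes "c < n" "x < n" "x \<noteq> c" "f x = Some y" "y < n"
  shows "det (parent_incidence_mat n c f x :: 'a::comm_ring_1 mat) = det (parent_incidence_mat n c f y)"
proof -
  have "parent_incidence_mat n c f x = addrow 1 c x (parent_incidence_mat n c f y :: 'a mat)"
    by (rule eq_matI) (use assms in \<open>auto simp: parent_incidence_mat_def incidence_entry_def\<close>)
  then show ?thesis using det_addrow[of x n c "parent_incidence_mat n c f y :: 'a mat" 1] assms by simp
qed

lemma det_parent_incidence_mat_orphan:
  assumes "c < n" "x < n" "x \<noteq> c" "f x = None"
  shows "det (parent_incidence_mat n c f x :: 'a::comm_ring_1 mat) = 0"
proof (rule det_identical_rows[of _ n c x])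
  show "row (parent_incidence_mat n c f x :: 'a mat) c = row (parent_incidence_mat n c f x) x"
    by (rule eq_vecI) (use assms in \<open>auto simp: parent_incidence_mat_def incidence_entry_def\<close>)
qed (use assms in auto)

lemma det_parent_incidence_mat_reach:
  assumes c: "c < n" and root: "f c = None" and range: "\<And>i j. i < n \<Longrightarrow> f i = Some j \<Longrightarrow> j < n"
    and ac: "acyclic (parent_arcs n f)" and x: "x < n"
  shows "det (parent_incidence_mat n c f x :: 'a::comm_ring_1 mat) =
    (if (c, x) \<in> (parent_arcs n f)\<^sup>* then det (parent_incidence_mat n c f c) else 0)"
  using x
proof (induction x rule: wf_induct[OF finite_acyclic_wf[OF finite_parent_arcs ac]])
  case (1 x)
  show ?case
  proof (cases "x = c")
    case False
    show ?thesis
    proof (cases "f x")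
      case None
      then have "(c, x) \<notin> (parent_arcs n f)\<^sup>*" using False by (auto elim: parent_arcs_last)
      then show ?thesis using det_parent_incidence_mat_orphan[where 'a='a, of c n x f, OF c 1(2) False None] by simp
    next
      case (Some y)
      have y: "y < n" using range 1(2) Some by blast
      have yx: "(y, x) \<in> parent_arcs n f" using 1(2) Some by (simp add: parent_arcs_def)
      have "(c, x) \<in> (parent_arcs n f)\<^sup>* \<longleftrightarrow> (c, y) \<in> (parent_arcs n f)\<^sup>*"
        using False Some yx by (auto elim: parent_arcs_last intro: rtrancl_into_rtrancl)
      then show ?thesis
        using det_parent_incidence_mat_parent[where 'a='a, of c n x f y, OF c 1(2) False Some y] 1(1)[rule_format, OF yx y] by simp
    qed
  qed simp
qed

lemma det_parent_incidence_mat_root: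
  assumes c: "c < n" and root: "f c = None" and range: "\<And>i j. i < n \<Longrightarrow> f i = Some j \<Longrightarrow> j < n"
    and ac: "acyclic (parent_arcs n f)"
  shows "det (parent_incidence_mat n c f c :: 'a::comm_ring_1 mat) = 1"
  using root range ac
proof (induction "card (parent_arcs n f)" arbitrary: f)
  case 0
  then have "parent_arcs n f = {}" using finite_parent_arcs by simp
  then have "parent_incidence_mat n c f c = (1\<^sub>m n :: 'a mat)"
    by (intro eq_matI) (auto simp: parent_incidence_mat_def incidence_entry_def parent_arcs_def)
  then show ?case by simp
next
  case (Suc m)
  then have "parent_arcs n f \<noteq> {}" by auto
  then obtain y v where yv: "(y, v) \<in> parent_arcs n f" by auto
  then have v: "v < n" "f v = Some y" and y: "y < n" and vc: "v \<noteq> c"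
    using Suc.prems by (auto simp: parent_arcs_def)
  define g where "g = f(v := None)"
  have arcs_g: "parent_arcs n g = parent_arcs n f - {(y, v)}"
    using v by (auto simp: parent_arcs_def g_def)
  have card_g: "m = card (parent_arcs n g)"
    using Suc.hyps(2) yv finite_parent_arcs by (simp add: arcs_g)
  have range_g: "\<And>i j. i < n \<Longrightarrow> g i = Some j \<Longrightarrow> j < n" using Suc.prems(2) by (auto simp: g_def split: if_splits)
  have ac_g: "acyclic (parent_arcs n g)" using Suc.prems(3) arcs_g by (auto intro: acyclic_subset)
  have "det (parent_incidence_mat n c g c :: 'a mat) = 1"
    using Suc.hyps(1)[OF card_g] Suc.prems(1) vc range_g ac_g by (simp add: g_def)
  moreover have "(v, y) \<notin> (parent_arcs n g)\<^sup>*"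
  proof
    assume "(v, y) \<in> (parent_arcs n g)\<^sup>*"
    then have "(v, y) \<in> (parent_arcs n f)\<^sup>*" using arcs_g rtrancl_mono[of "parent_arcs n g"] by blast
    then have "(v, v) \<in> (parent_arcs n f)\<^sup>+" using yv by (rule rtrancl_into_trancl1)
    then show False using Suc.prems(3) by (simp add: acyclic_def)
  qed
  then have "det (parent_incidence_mat n v g y :: 'a mat) = 0"
    using det_parent_incidence_mat_reach[OF v(1) _ range_g ac_g y] by (simp add: g_def)
  moreover
  \<comment> \<open>row v of the matrix for g is e_v = (e_v - e_y) + e_y\<close>
  have "det (parent_incidence_mat n c g c :: 'a mat) =
      det (parent_incidence_mat n c f c) + det (parent_incidence_mat n v g y)"
    by (rule det_add_row[of _ n _ _ v])
      (use v vc Suc.prems(1) in \<open>auto simp: parent_incidence_mat_def incidence_entry_def g_def\<close>)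
  ultimately show ?case by simp
qed

lemma parent_arcs_cycle:
  assumes "(u, u) \<in> (parent_arcs n f)\<^sup>+"
  shows "u < n" "f u = Some (the (f u))" "(the (f u), the (f u)) \<in> (parent_arcs n f)\<^sup>+"
proof -
  obtain z where z: "(u, z) \<in> (parent_arcs n f)\<^sup>*" "(z, u) \<in> parent_arcs n f"
    using assms by (meson tranclD2)
  then show u: "u < n" "f u = Some (the (f u))" by (auto simp: parent_arcs_def)
  have "z = the (f u)" using z(2) by (simp add: parent_arcs_def)
  then show "(the (f u), the (f u)) \<in> (parent_arcs n f)\<^sup>+"
    using z by (meson rtrancl_into_trancl2)
qed

lemma bij_betw_parent_cyclic:
  fixes n :: nat and f :: "nat \<Rightarrow> nat option"
  defines "Z \<equiv> {u. (u, u) \<in> (parent_arcs n f)\<^sup>+}"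
  shows "bij_betw (\<lambda>u. the (f u)) Z Z"
proof -
  have "Z \<subseteq> {0..<n}" using parent_arcs_cycle(1) by (auto simp: Z_def)
  then have fin: "finite Z" by (rule finite_subset) simp
  have "(\<lambda>u. the (f u)) ` Z \<subseteq> Z" using parent_arcs_cycle(3) by (auto simp: Z_def)
  moreover have "z \<in> (\<lambda>u. the (f u)) ` Z" if "z \<in> Z" for z
  proof -
    have "(z, z) \<in> (parent_arcs n f)\<^sup>+" using that by (simp add: Z_def)
    then obtain u where u: "(z, u) \<in> parent_arcs n f" "(u, z) \<in> (parent_arcs n f)\<^sup>*"
      by (meson tranclD)
    then have "u \<in> Z" by (auto simp: Z_def intro: rtrancl_into_trancl1)
    moreover have "the (f u) = z" using u(1) by (simp add: parent_arcs_def)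
    ultimately show ?thesis by blast
  qed
  ultimately have "(\<lambda>u. the (f u)) ` Z = Z" by blast
  then show ?thesis using fin by (simp add: bij_betw_def eq_card_imp_inj_on)
qed

lemma det_parent_incidence_mat_cyclic:
  assumes root: "f c = None" and cyc: "\<not> acyclic (parent_arcs n f)"
  shows "det (parent_incidence_mat n c f x :: 'a::field mat) = 0"
proof -
  define Z where "Z = {u. (u, u) \<in> (parent_arcs n f)\<^sup>+}"
  let ?E = "parent_incidence_mat n c f x :: 'a mat"
  have Z: "u < n" "u \<noteq> c" "f u = Some k \<longleftrightarrow> the (f u) = k" if "u \<in> Z" for u k
    using parent_arcs_cycle[of u n f] that root by (auto simp: Z_def)
  obtain z where z: "z \<in> Z" using cyc by (auto simp: acyclic_def Z_def)
  \<comment> \<open>the rows indexed by the vertices on cycles sum to zero\<close>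
  define w where "w = vec n (\<lambda>i. if i \<in> Z then 1 else 0 :: 'a)"
  have "w \<noteq> 0\<^sub>v n"
  proof
    assume "w = 0\<^sub>v n"
    then have "w $ z = 0" using Z(1)[OF z] by simp
    then show False using Z(1)[OF z] z by (simp add: w_def)
  qed
  moreover have "?E\<^sup>T *\<^sub>v w = 0\<^sub>v n"
  proof (rule eq_vecI)
    fix k assume "k < dim_vec (0\<^sub>v n :: 'a vec)"
    then have k: "k < n" by simp
    have "(?E\<^sup>T *\<^sub>v w) $ k = (\<Sum>i = 0..<n. ?E $$ (i, k) * w $ i)"
      using k by (simp add: scalar_prod_def w_def index_mult_mat_vec)
    also have "\<dots> = (\<Sum>i \<in> Z. ?E $$ (i, k))"
      by (rule sum.mono_neutral_cong_right) (use Z(1) k in \<open>auto simp: w_def\<close>)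
    also have "\<dots> = (\<Sum>i \<in> Z. if i = k then 1 else 0) - (\<Sum>i \<in> Z. if the (f i) = k then 1 else 0)"
      unfolding sum_subtractf[symmetric]
      by (rule sum.cong) (use Z k in \<open>auto simp: parent_incidence_mat_def incidence_entry_def\<close>)
    also have "(\<Sum>i \<in> Z. if the (f i) = k then 1 else 0) = (\<Sum>i \<in> Z. if i = k then 1 else (0::'a))"
      using sum.reindex_bij_betw[OF bij_betw_parent_cyclic[where n=n and f=f, folded Z_def]] by simp
    finally show "(?E\<^sup>T *\<^sub>v w) $ k = 0\<^sub>v n $ k" using k by simp
  qed auto
  ultimately have "det ?E\<^sup>T = 0"
    using det_0_iff_vec_prod_zero_field[of "?E\<^sup>T" n] vec_carrier[of n] unfolding w_def
    by (metis carrier_matI index_transpose_mat(2,3) parent_incidence_mat_dim)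
  then show ?thesis using det_transpose[of ?E n] by simp
qed

lemma det_parent_incidence_mat:
  assumes "c < n" "f c = None" "\<And>i j. i < n \<Longrightarrow> f i = Some j \<Longrightarrow> j < n" "x < n"
  shows "det (parent_incidence_mat n c f x :: 'a::field mat) =
    (if acyclic (parent_arcs n f) \<and> (c, x) \<in> (parent_arcs n f)\<^sup>* then 1 else 0)"
proof (cases "acyclic (parent_arcs n f)")
  case True
  then show ?thesis
    using det_parent_incidence_mat_reach[where 'a='a, of c n f x]
      det_parent_incidence_mat_root[where 'a='a, of c n f] assms by simp
next
  case False
  then show ?thesis using det_parent_incidence_mat_cyclic[where 'a='a, of f c n x] assms(2) by simp
qed

section \<open>Expansion of the adjugate entry\<close>

text \<open>None stands for the term s e_i of row i (for i = c: the whole row e_ob), Some j for the arc j -> i.\<close>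

definition parent_choices :: "nat \<Rightarrow> nat \<Rightarrow> nat \<Rightarrow> nat option set" where
  "parent_choices n c i = (if i = c then {None} else insert None (Some ` ({0..<n} - {i})))"

lemma PiE_parent_choicesD:
  assumes "f \<in> PiE {0..<n} (parent_choices n c)" "c < n"
  shows "f c = None" "\<And>i j. i < n \<Longrightarrow> f i = Some j \<Longrightarrow> j < n"
  using assms by (auto simp: PiE_def Pi_def parent_choices_def split: if_splits)

lemma inj_on_parent_arcs: "inj_on (parent_arcs n) (PiE {0..<n} X)"
proof (rule inj_onI)
  fix f g assume f: "f \<in> PiE {0..<n} X" and g: "g \<in> PiE {0..<n} X"
    and eq: "parent_arcs n f = parent_arcs n g"
  have "f i = Some j \<longleftrightarrow> g i = Some j" if "i < n" for i j
    using eq that by (auto simp: parent_arcs_def set_eq_iff)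
  then show "f = g"
    by (intro PiE_ext[OF f g]) (metis atLeastLessThan_iff not_None_eq)
qed

lemma parent_arcs_PiE_image:
  "parent_arcs n ` PiE {0..<n} (parent_choices n c) =
    {F. F \<subseteq> {0..<n} \<times> {0..<n} \<and> F \<inter> Id = {} \<and> single_valued (F\<inverse>) \<and> c \<notin> Range F}"
    (is "_ = ?R")
proof (rule equalityI; rule subsetI)
  fix F assume "F \<in> parent_arcs n ` PiE {0..<n} (parent_choices n c)"
  then obtain f where "f \<in> PiE {0..<n} (parent_choices n c)" "F = parent_arcs n f" by blast
  then show "F \<in> ?R"
    by (fastforce simp: parent_arcs_def PiE_def Pi_def parent_choices_def single_valued_def
        split: if_splits)
next
  fix F assume "F \<in> ?R"
  then have FV: "F \<subseteq> {0..<n} \<times> {0..<n}" and irrefl: "F \<inter> Id = {}"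
    and sv: "single_valued (F\<inverse>)" and c: "c \<notin> Range F" by auto
  have parent: "(THE j. (j, i) \<in> F) = j" if "(j, i) \<in> F" for i j
    using that sv by (auto dest: single_valuedD)
  define f where "f = restrict (\<lambda>i. if i \<in> Range F then Some (THE j. (j, i) \<in> F) else None) {0..<n}"
  have "f \<in> PiE {0..<n} (parent_choices n c)"
  proof (rule PiE_I)
    fix i assume i: "i \<in> {0..<n}"
    show "f i \<in> parent_choices n c i"
    proof (cases "i \<in> Range F")
      case True
      then obtain j where ji: "(j, i) \<in> F" by blast
      then show ?thesis using i FV irrefl c parent[OF ji] by (auto simp: f_def parent_choices_def)
    qed (use i in \<open>auto simp: f_def parent_choices_def\<close>)
  qed (simp add: f_def)
  moreover have "parent_arcs n f = F"
    using FV parent by (auto simp: parent_arcs_def f_def)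
  ultimately show "F \<in> parent_arcs n ` PiE {0..<n} (parent_choices n c)" by blast
qed

lemma prod_monom: "(\<Prod>i\<in>I. monom (a i) (d i)) = monom (\<Prod>i\<in>I. a i) (\<Sum>i\<in>I. d i)"
  by (induction I rule: infinite_finite_induct) (simp_all add: mult_monom monom_0 one_pCons)

lemma forest_weight_parent_arcs:
  "forest_weight A (parent_arcs n f) = (\<Prod>i = 0..<n. case f i of None \<Rightarrow> 1 | Some j \<Rightarrow> A $$ (i, j))"
proof -
  have "(\<Prod>i = 0..<n. case f i of None \<Rightarrow> 1 | Some j \<Rightarrow> A $$ (i, j)) =
      (\<Prod>i \<in> {i \<in> {0..<n}. f i \<noteq> None}. A $$ (i, the (f i)))"
    by (rule prod.mono_neutral_cong_right) (auto split: option.splits)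
  also have "\<dots> = forest_weight A (parent_arcs n f)"
    unfolding forest_weight_def parent_arcs_eq_image by (subst prod.reindex) (auto intro: inj_onI)
  finally show ?thesis by simp
qed

lemma forest_weight_eq_0:
  assumes A: "A \<in> carrier_mat N N" and nonneg: "\<And>i j. i < N \<Longrightarrow> j < N \<Longrightarrow> A $$ (i, j) \<ge> 0"
    and F: "F \<subseteq> {0..<N} \<times> {0..<N}" "\<not> F \<subseteq> arcs A"
  shows "forest_weight A F = 0"
proof -
  obtain j i where ji: "(j, i) \<in> F" "(j, i) \<notin> arcs A" using F(2) by auto
  then have "A $$ (i, j) = 0" using A F(1) nonneg[of i j] by (fastforce simp: arcs_def)
  moreover have "finite F" using F(1) by (rule finite_subset) simp
  ultimately show ?thesis
    unfolding forest_weight_def using ji(1) by (intro prod_zero bexI[of _ "(j, i)"]) auto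
qed

definition choice_weight :: "real mat \<Rightarrow> nat \<Rightarrow> nat \<Rightarrow> nat option \<Rightarrow> real poly" where
  "choice_weight A c i p = (case p of None \<Rightarrow> if i = c then 1 else [:0, 1:] | Some j \<Rightarrow> [:A $$ (i, j):])"

lemma prod_choice_weight:
  assumes c: "c < N" and root: "f c = None"
  shows "(\<Prod>i = 0..<N. choice_weight A c i (f i)) =
    monom (forest_weight A (parent_arcs N f)) (N - 1 - card (parent_arcs N f))"
proof -
  have "choice_weight A c i (f i) =
      monom (case f i of None \<Rightarrow> 1 | Some j \<Rightarrow> A $$ (i, j)) (if i \<noteq> c \<and> f i = None then 1 else 0)" for i
    by (cases "f i") (auto simp: choice_weight_def monom_0 monom_Suc one_pCons root)
  then have "(\<Prod>i = 0..<N. choice_weight A c i (f i)) =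
      monom (forest_weight A (parent_arcs N f)) (card {i \<in> {0..<N}. i \<noteq> c \<and> f i = None})"
    by (simp add: prod_monom forest_weight_parent_arcs sum.If_cases Int_def conj_commute)
  also have "card {i \<in> {0..<N}. i \<noteq> c \<and> f i = None} = N - 1 - card (parent_arcs N f)"
  proof -
    have "{i \<in> {0..<N}. i \<noteq> c \<and> f i = None} \<union> {i \<in> {0..<N}. f i \<noteq> None} = {0..<N} - {c}"
      using root by auto
    moreover have "card ({i \<in> {0..<N}. i \<noteq> c \<and> f i = None} \<union> {i \<in> {0..<N}. f i \<noteq> None}) =
        card {i \<in> {0..<N}. i \<noteq> c \<and> f i = None} + card {i \<in> {0..<N}. f i \<noteq> None}"
      by (rule card_Un_disjoint) auto
    ultimately show ?thesis using c by (simp add: card_parent_arcs)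
  qed
  finally show ?thesis .
qed

lemma incidence_entry_poly: "(incidence_entry c x i p k :: 'a::comm_ring_1 poly) = [:incidence_entry c x i p k:]"
  by (simp add: incidence_entry_def one_pCons)

lemma laplacian_entry_sum:
  assumes A: "A \<in> carrier_mat N N" and diag: "\<And>i. i < N \<Longrightarrow> A $$ (i, i) = 0"
    and i: "i < N" and k: "k < N"
  shows "laplacian A $$ (i, k) =
    (\<Sum>j \<in> {0..<N} - {i}. A $$ (i, j) * ((if k = i then 1 else 0) - (if j = k then 1 else 0)))"
proof (cases "k = i")
  case True
  have "(\<Sum>j \<in> {0..<N} - {i}. A $$ (i, j) * ((if k = i then 1 else 0) - (if j = k then 1 else 0))) =
      (\<Sum>j \<in> {0..<N} - {i}. A $$ (i, j))"
    using True by (intro sum.cong) auto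
  also have "\<dots> = (\<Sum>j<N. A $$ (i, j))"
    using diag[OF i] i by (subst sum.mono_neutral_left[of "{0..<N}"]) (auto simp: lessThan_atLeast0)
  finally show ?thesis
    using True A i diag[OF i] by (simp add: laplacian_def degree_mat_def)
next
  case False
  have "(\<Sum>j \<in> {0..<N} - {i}. A $$ (i, j) * ((if k = i then 1 else 0) - (if j = k then 1 else 0))) =
      (\<Sum>j \<in> {0..<N} - {i}. if j = k then - A $$ (i, j) else 0)"
    using False by (intro sum.cong) auto
  also have "\<dots> = - A $$ (i, k)" using False k by simp
  finally show ?thesis using False A i k by (simp add: laplacian_def degree_mat_def)
qed

lemma sI_plus_laplacian_row_expansion:
  assumes A: "A \<in> carrier_mat N N" and diag: "\<And>i. i < N \<Longrightarrow> A $$ (i, i) = 0"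
    and i: "i < N" and k: "k < N" and ic: "i \<noteq> c"
  shows "sI_plus (laplacian A) $$ (i, k) =
    (\<Sum>p \<in> parent_choices N c i. choice_weight A c i p * incidence_entry c ob i p k)"
proof -
  have L: "laplacian A \<in> carrier_mat N N" using A by (auto simp: laplacian_def degree_mat_def)
  have term_Some: "choice_weight A c i (Some j) * incidence_entry c ob i (Some j) k =
      [:A $$ (i, j) * ((if k = i then 1 else 0) - (if j = k then 1 else 0)):]" for j
    using ic by (simp add: choice_weight_def incidence_entry_poly) (simp add: incidence_entry_def)
  have "(\<Sum>p \<in> parent_choices N c i. choice_weight A c i p * incidence_entry c ob i p k) =
      [:0, 1:] * (if k = i then 1 else 0) +
      (\<Sum>j \<in> {0..<N} - {i}. choice_weight A c i (Some j) * incidence_entry c ob i (Some j) k)"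
    using ic by (simp add: parent_choices_def sum.reindex choice_weight_def incidence_entry_def)
  also have "\<dots> = [:0, 1:] * (if k = i then 1 else 0) +
      (\<Sum>j \<in> {0..<N} - {i}. [:A $$ (i, j) * ((if k = i then 1 else 0) - (if j = k then 1 else 0)):])"
    by (simp only: term_Some)
  also have "\<dots> = (if k = i then [:0, 1:] else 0) + [:laplacian A $$ (i, k):]"
    by (simp add: sum_to_poly laplacian_entry_sum[OF A diag i k])
  also have "\<dots> = sI_plus (laplacian A) $$ (i, k)"
    using L i k by (auto simp: sI_plus_def)
  finally show ?thesis by simp
qed

lemma det_parent_incidence_mat_poly:
  "det (parent_incidence_mat n c f x :: 'a::comm_ring_1 poly mat) = [:det (parent_incidence_mat n c f x):]"
proof -
  interpret const: comm_ring_hom "\<lambda>a::'a. [:a:]"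
    by unfold_locales (simp_all add: one_pCons)
  have "parent_incidence_mat n c f x = map_mat (\<lambda>a. [:a:]) (parent_incidence_mat n c f x :: 'a mat)"
    by (rule eq_matI) (simp_all add: parent_incidence_mat_def incidence_entry_poly)
  then show ?thesis by simp
qed

lemma adj_sI_plus_laplacian_entry:
  assumes A: "A \<in> carrier_mat N N" and nonneg: "\<And>i j. i < N \<Longrightarrow> j < N \<Longrightarrow> A $$ (i, j) \<ge> 0"
    and diag: "\<And>i. i < N \<Longrightarrow> A $$ (i, i) = 0" and c: "c < N" and ob: "ob < N"
  shows "adj_mat (sI_plus (laplacian A)) $$ (ob, c) =
    (\<Sum>F \<in> rooted_forests A c ob. monom (forest_weight A F) (N - 1 - card F))"
proof -
  let ?M = "sI_plus (laplacian A)"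
  let ?PI = "PiE {0..<N} (parent_choices N c)"
  define g where "g F = monom (forest_weight A F) (N - 1 - card F) *
    [:if acyclic F \<and> (c, ob) \<in> F\<^sup>* then 1 else 0:]" for F
  have M: "?M \<in> carrier_mat N N" using A by (auto simp: sI_plus_def laplacian_def degree_mat_def)
  have rows: "(if i = c then (if k = ob then 1 else 0) else ?M $$ (i, k)) =
      (\<Sum>p \<in> parent_choices N c i. choice_weight A c i p * incidence_entry c ob i p k)"
    if "i < N" "k < N" for i k
    using sI_plus_laplacian_row_expansion[OF A diag that]
    by (auto simp: parent_choices_def choice_weight_def incidence_entry_def)
  have "adj_mat ?M $$ (ob, c) = cofactor ?M c ob" using M c ob by (simp add: adj_mat_def)
  also have "\<dots> = det (mat N N (\<lambda>(i, k). if i = c then (if k = ob then 1 else 0) else ?M $$ (i, k)))"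
    by (rule cofactor_eq_det_replace_row[OF M c ob])
  also have "\<dots> = (\<Sum>f \<in> ?PI. (\<Prod>i = 0..<N. choice_weight A c i (f i)) * det (parent_incidence_mat N c f ob))"
    unfolding parent_incidence_mat_def by (rule det_expand_rows) (auto simp: parent_choices_def rows)
  also have "\<dots> = (\<Sum>f \<in> ?PI. g (parent_arcs N f))"
  proof (rule sum.cong[OF refl])
    fix f assume f: "f \<in> ?PI"
    have root: "f c = None" and range: "\<And>i j. i < N \<Longrightarrow> f i = Some j \<Longrightarrow> j < N"
      using PiE_parent_choicesD[OF f c] by simp_all
    show "(\<Prod>i = 0..<N. choice_weight A c i (f i)) * det (parent_incidence_mat N c f ob) = g (parent_arcs N f)"
      using det_parent_incidence_mat[where f=f and 'a=real, OF c root range ob]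
      by (simp add: prod_choice_weight[where f=f, OF c root] det_parent_incidence_mat_poly g_def)
  qed
  also have "\<dots> = sum g (parent_arcs N ` ?PI)"
    by (simp add: sum.reindex inj_on_parent_arcs)
  also have "\<dots> = (\<Sum>F \<in> rooted_forests A c ob. monom (forest_weight A F) (N - 1 - card F))"
  proof (rule sum.mono_neutral_cong_right)
    show "finite (parent_arcs N ` ?PI)"
      by (intro finite_imageI finite_PiE) (auto simp: parent_choices_def)
    have arcs: "arcs A \<subseteq> {0..<N} \<times> {0..<N}" "arcs A \<inter> Id = {}"
      using arcs_subset[OF A] diag A by (auto simp: arcs_def)
    then show "rooted_forests A c ob \<subseteq> parent_arcs N ` ?PI"
      unfolding parent_arcs_PiE_image rooted_forests_def by blast
    show "\<forall>F \<in> parent_arcs N ` ?PI - rooted_forests A c ob. g F = 0"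
      using forest_weight_eq_0[OF A nonneg]
      unfolding parent_arcs_PiE_image rooted_forests_def g_def by auto
    show "g F = monom (forest_weight A F) (N - 1 - card F)" if "F \<in> rooted_forests A c ob" for F
      using that by (simp add: g_def rooted_forests_def)
  qed
  finally show ?thesis .
qed

lemma finite_rooted_forests:
  assumes "A \<in> carrier_mat N N"
  shows "finite (rooted_forests A c ob)"
proof (rule finite_subset)
  show "rooted_forests A c ob \<subseteq> Pow ({0..<N} \<times> {0..<N})"
    using arcs_subset[OF assms] by (auto simp: rooted_forests_def)
qed simp

lemma card_rooted_forest_le:
  assumes A: "A \<in> carrier_mat N N" and c: "c < N" and F: "F \<in> rooted_forests A c ob"
  shows "card F \<le> N - 1"
proof -
  have "inj_on snd F"
    using F by (auto simp: rooted_forests_def inj_on_def dest: single_valuedD)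
  then have "card F = card (snd ` F)" by (simp add: card_image)
  also have "\<dots> \<le> card ({0..<N} - {c})"
  proof (rule card_mono)
    show "snd ` F \<subseteq> {0..<N} - {c}"
      using F arcs_subset[OF A] by (force simp: rooted_forests_def)
  qed simp
  finally show ?thesis using c by simp
qed

theorem lemma2:
  fixes A :: "real mat" and N c ob :: nat
  assumes "A \<in> carrier_mat N N"
    and "\<And>i j. i < N \<Longrightarrow> j < N \<Longrightarrow> A $$ (i,j) \<ge> 0"
    and "\<And>i. i < N \<Longrightarrow> A $$ (i,i) = 0"
    and "c < N" and "ob < N"
  shows "\<forall>i < N. coeff (adj_mat (sI_plus (laplacian A)) $$ (ob, c)) i
           = theta A (forests_root A (N - i - 1) c ob)"
proof (intro allI impI)
  fix n assume n: "n < N"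
  have degree: "N - 1 - card F = n \<longleftrightarrow> card F = N - n - 1" if "F \<in> rooted_forests A c ob" for F
    using card_rooted_forest_le[OF assms(1,4) that] n by linarith
  have "coeff (adj_mat (sI_plus (laplacian A)) $$ (ob, c)) n =
      (\<Sum>F \<in> rooted_forests A c ob. if N - 1 - card F = n then forest_weight A F else 0)"
    by (simp add: adj_sI_plus_laplacian_entry[OF assms] coeff_sum coeff_monom)
  also have "\<dots> = (\<Sum>F \<in> rooted_forests A c ob. if card F = N - n - 1 then forest_weight A F else 0)"
    by (intro sum.cong refl) (simp only: degree)
  also have "\<dots> = (\<Sum>F \<in> {F \<in> rooted_forests A c ob. card F = N - n - 1}. forest_weight A F)"
    by (simp add: sum.inter_filter[OF finite_rooted_forests[OF assms(1)]])
  also have "\<dots> = theta A (forests_root A (N - n - 1) c ob)"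
    by (simp add: theta_def forests_root_eq[OF assms(1,4)])
  finally show "coeff (adj_mat (sI_plus (laplacian A)) $$ (ob, c)) n = theta A (forests_root A (N - n - 1) c ob)" .
qed

end
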